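(* Let $A$ be a nonempty set of positive integers and let $n$ be a positive integer. Then (a) $\displaystyle\sum_{k=1}^{n}N^p_A(k)\,\omega(n-k)=\sum_{k=1}^{n}\tau_A(k)\big(q^e_{\mathbb N\setminus A}(n-k)-q^o_{\mathbb N\setminus A}(n-k)\big)$; (b) $\displaystyle\sum_{k=1}^{n}(-1)^{n-k}N^q_A(k)\,o(n-k)=\sum_{k=1}^{n}\tau^s_A(k)\big(p^e_{\mathbb N\setminus A}(n-k)-p^o_{\mathbb N\setminus A}(n-k)\big)$.
   Context: $\mathbb N$ is the set of positive integers. For a set $B$ of positive integers: $N^p_B(n)$ (resp. $N^q_B(n)$) is the total number of parts, summed over all partitions (resp. partitions into pairwise distinct parts) of $n$ with parts in $B$; $p^e_B(m)$, $p^o_B(m)$ count partitions of $m$ with parts in $B$ having an even, resp. odd, number of parts; $q^e_B(m)$, $q^o_B(m)$ are the analogous counts for partitions into distinct parts from $B$; $p^e_B(0)=q^e_B(0)=1$, $p^o_B(0)=q^o_B(0)=0$. $\tau_A(n)=\#\{a\in A:a\mid n\}$, $\tau^s_A(n)=\sum_{a\in A,\,a\mid n}(-1)^{n/a-1}$. $\omega(m)=1$ if $m=0$, $\omega(m)=(-1)^k$ if $m=\frac{3k^2\pm k}{2}$ for an integer $k\ge1$, and $0$ otherwise. $o(m)$ is the number of partitions of $m$ into distinct odd parts, $o(0)=1$. *)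

theory Defs
  imports Main "HOL-Library.Multiset"
begin

(* Sets of positive integers are modelled as nat sets not containing 0. *)

definition partitions :: "nat set \<Rightarrow> nat \<Rightarrow> nat multiset set" where
  "partitions B n = {M. set_mset M \<subseteq> B \<and> 0 \<notin> set_mset M \<and> sum_mset M = n}"

definition dpartitions :: "nat set \<Rightarrow> nat \<Rightarrow> nat set set" where
  "dpartitions B n = {S. finite S \<and> S \<subseteq> B \<and> 0 \<notin> S \<and> \<Sum>S = n}"

definition Np :: "nat set \<Rightarrow> nat \<Rightarrow> int" where
  "Np B n = (\<Sum>M\<in>partitions B n. int (size M))"

definition Nq :: "nat set \<Rightarrow> nat \<Rightarrow> int" where
  "Nq B n = (\<Sum>S\<in>dpartitions B n. int (card S))"

definition pe :: "nat set \<Rightarrow> nat \<Rightarrow> int" where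
  "pe B m = int (card {M\<in>partitions B m. even (size M)})"
definition po :: "nat set \<Rightarrow> nat \<Rightarrow> int" where
  "po B m = int (card {M\<in>partitions B m. odd (size M)})"
definition qe :: "nat set \<Rightarrow> nat \<Rightarrow> int" where
  "qe B m = int (card {S\<in>dpartitions B m. even (card S)})"
definition qo :: "nat set \<Rightarrow> nat \<Rightarrow> int" where
  "qo B m = int (card {S\<in>dpartitions B m. odd (card S)})"

definition tauA :: "nat set \<Rightarrow> nat \<Rightarrow> int" where
  "tauA A n = int (card {a\<in>A. a dvd n})"

definition tausA :: "nat set \<Rightarrow> nat \<Rightarrow> int" where
  "tausA A n = (\<Sum>a\<in>{a\<in>A. a dvd n}. (-1) ^ (n div a - 1))"

definition pent :: "nat \<Rightarrow> nat \<Rightarrow> bool" where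
  "pent m k \<longleftrightarrow> k \<ge> 1 \<and> (2 * m = 3 * k^2 + k \<or> 2 * m = 3 * k^2 - k)"

definition omega :: "nat \<Rightarrow> int" where
  "omega m = (if m = 0 then 1
              else if \<exists>k. pent m k then (-1) ^ (THE k. pent m k) else 0)"

definition odp :: "nat \<Rightarrow> int" where
  "odp m = int (card (dpartitions {k. odd k} m))"

definition compl_pos :: "nat set \<Rightarrow> nat set" where
  "compl_pos A = {k. k > 0 \<and> k \<notin> A}"

end

theory Submission
  imports Defs "HOL-Computational_Algebra.Formal_Power_Series"
begin

(* Both identities compare coefficients of formal power series. For a set B of positive
   integers and a weight w, let P_B(w) and Q_B(w) be the generating functions of partitions,
   resp. partitions into distinct parts, with parts in B, each partition weighted by
   w^(number of parts). Then Q_B(w) = prod_{k in B} (1 + w x^k), P_B(w) Q_B(-w) = 1, and Q is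
   multiplicative over disjoint unions of sets of parts.

   Summing the multiplicity of each part a in A over all partitions gives
     sum_n N^p_A(n) x^n = P_A(1) T(x)   and   sum_n N^q_A(n) x^n = Q_A(1) T_s(x),
   where T = sum_{a in A} x^a/(1 - x^a) and T_s = sum_{a in A} x^a/(1 + x^a) are the generating
   functions of tau_A and tau^s_A.

   (a) Euler's pentagonal number theorem, proved via Shanks' finite identity, reads
   sum_m omega(m) x^m = Q_N(-1) = Q_A(-1) Q_{N-A}(-1), and P_A(1) Q_A(-1) = 1 leaves
   Q_{N-A}(-1) = sum_m (q^e - q^o)(m) x^m.

   (b) sum_m (-1)^m o(m) x^m = Q_odd(-1), and Euler's identity Q_N(1) Q_odd(-1) = 1 makes
   Q_A(1) Q_odd(-1) the inverse of Q_{N-A}(1), that is P_{N-A}(-1) = sum_m (p^e - p^o)(m) x^m.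

   Infinite sets of parts are reduced to finite products by truncation: the coefficients up to
   x^n only involve parts at most n. *)

unbundle fps_syntax

section \<open>Agreement of power series up to a given degree\<close>

definition fps_eq_upto :: "nat \<Rightarrow> 'a::semiring_0 fps \<Rightarrow> 'a fps \<Rightarrow> bool" where
  "fps_eq_upto n f g \<longleftrightarrow> (\<forall>i\<le>n. f $ i = g $ i)"

lemma fps_eq_upto_refl [simp]: "fps_eq_upto n f f"
  by (simp add: fps_eq_upto_def)

lemma fps_eq_upto_trans [trans]: "fps_eq_upto n f g \<Longrightarrow> fps_eq_upto n g h \<Longrightarrow> fps_eq_upto n f h"
  by (simp add: fps_eq_upto_def)

lemma fps_eq_upto_mult:
  "fps_eq_upto n f f' \<Longrightarrow> fps_eq_upto n g g' \<Longrightarrow> fps_eq_upto n (f * g) (f' * g')"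
  unfolding fps_eq_upto_def fps_mult_nth by (auto intro!: sum.cong)

lemma fps_eq_upto_all: "(\<And>n. fps_eq_upto n f g) \<Longrightarrow> f = g"
  by (auto simp: fps_eq_upto_def intro: fps_ext)

lemma fps_const_minus_one [simp]: "fps_const (-1 :: 'a :: ring_1) = -1"
  by (metis fps_const_1_eq_1 fps_const_neg)

lemma fps_one_minus_X_power_nonzero:
  assumes "0 < a"
  shows "1 - fps_X ^ a \<noteq> (0 :: 'a :: comm_ring_1 fps)"
proof
  assume "1 - fps_X ^ a = (0 :: 'a fps)"
  then have "(1 - fps_X ^ a :: 'a fps) $ 0 = 0"
    by simp
  with assms show False
    by simp
qed

lemma fps_mult_nth_from_1:
  fixes f g :: "'a :: semiring_0 fps"
  shows "f $ 0 = 0 \<Longrightarrow> (f * g) $ n = (\<Sum>k=1..n. f $ k * g $ (n - k))"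
  by (simp add: fps_mult_nth sum.atLeast_Suc_atMost)

section \<open>Partitions\<close>

lemma mem_le_sum_mset: "x \<in># M \<Longrightarrow> x \<le> sum_mset (M :: nat multiset)"
  by (metis le_add1 multi_member_split sum_mset.add_mset)

lemma size_le_sum_mset: "0 \<notin># M \<Longrightarrow> size M \<le> sum_mset (M :: nat multiset)"
  by (induction M) auto

lemma size_eq_sum_count:
  assumes "finite T" "set_mset M \<subseteq> T"
  shows "size M = (\<Sum>a\<in>T. count M a)"
proof -
  have "size M = (\<Sum>a\<in>set_mset M. count M a)"
    by (rule size_multiset_overloaded_eq)
  also have "\<dots> = (\<Sum>a\<in>T. count M a)"
    by (rule sum.mono_neutral_left) (use assms in \<open>auto simp: not_in_iff\<close>)
  finally show ?thesis .
qed

lemma partition_parts: "M \<in> partitions B m \<Longrightarrow> set_mset M \<subseteq> B \<inter> {1..m}"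
proof
  fix x assume "M \<in> partitions B m" "x \<in># M"
  then show "x \<in> B \<inter> {1..m}"
    using mem_le_sum_mset[of x M] by (auto simp: partitions_def Suc_le_eq intro: gr0I)
qed

lemma dpartition_parts: "S \<in> dpartitions B m \<Longrightarrow> S \<subseteq> B \<inter> {1..m}"
proof
  fix x assume "S \<in> dpartitions B m" "x \<in> S"
  then show "x \<in> B \<inter> {1..m}"
    using member_le_sum[of x S "\<lambda>x. x"] by (auto simp: dpartitions_def Suc_le_eq intro: gr0I)
qed

lemma finite_partitions: "finite (partitions B m)"
proof (rule finite_subset)
  show "partitions B m \<subseteq> (\<Union>s\<le>m. multisets_of_size {1..m} s)"
  proof
    fix M assume M: "M \<in> partitions B m"
    then have "size M \<le> m"
      using size_le_sum_mset by (auto simp: partitions_def)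
    with M show "M \<in> (\<Union>s\<le>m. multisets_of_size {1..m} s)"
      using partition_parts[OF M] by (auto simp: multisets_of_size_def partitions_def)
  qed
qed auto

lemma finite_dpartitions: "finite (dpartitions B m)"
proof (rule finite_subset)
  show "dpartitions B m \<subseteq> Pow {1..m}"
    using dpartition_parts by blast
qed auto

lemma partitions_0: "partitions B 0 = {{#}}"
proof -
  have "M = {#}" if "M \<in> partitions B 0" for M
  proof -
    from that have "0 \<notin># M" "sum_mset M = 0"
      unfolding partitions_def by blast+
    then show "M = {#}"
      using size_le_sum_mset[of M] by (metis le_zero_eq size_eq_0_iff_empty)
  qed
  then show ?thesis
    by (auto simp: partitions_def)
qed

lemma dpartitions_0: "dpartitions B 0 = {{}}"
  by (auto simp: dpartitions_def)

lemma Np_0: "Np A 0 = 0"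
  by (simp add: Np_def partitions_0)

lemma Nq_0: "Nq A 0 = 0"
  by (simp add: Nq_def dpartitions_0)

lemma partitions_cong_upto:
  assumes "B \<inter> {1..n} = B' \<inter> {1..n}" "m \<le> n"
  shows "partitions B m = partitions B' m"
proof -
  have "set_mset M \<subseteq> B \<longleftrightarrow> set_mset M \<subseteq> B'" if "M \<in> partitions UNIV m" for M
  proof -
    have "set_mset M \<subseteq> {1..n}"
      using partition_parts[OF that] assms(2) by auto
    then show ?thesis
      using assms(1) by blast
  qed
  then show ?thesis
    by (auto simp: partitions_def)
qed

lemma dpartitions_cong_upto:
  assumes "B \<inter> {1..n} = B' \<inter> {1..n}" "m \<le> n"
  shows "dpartitions B m = dpartitions B' m"
proof -
  have "S \<subseteq> B \<longleftrightarrow> S \<subseteq> B'" if "S \<in> dpartitions UNIV m" for S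
  proof -
    have "S \<subseteq> {1..n}"
      using dpartition_parts[OF that] assms(2) by auto
    then show ?thesis
      using assms(1) by blast
  qed
  then show ?thesis
    by (auto simp: dpartitions_def)
qed

lemma partitions_containing_bij:
  assumes "a \<in> B" "0 < a" "a \<le> m"
  shows "bij_betw (add_mset a) (partitions B (m - a)) {M \<in> partitions B m. a \<in># M}"
proof (rule bij_betw_byWitness[where f' = "\<lambda>M. M - {#a#}"])
  show "add_mset a ` partitions B (m - a) \<subseteq> {M \<in> partitions B m. a \<in># M}"
    using assms by (auto simp: partitions_def)
  show "(\<lambda>M. M - {#a#}) ` {M \<in> partitions B m. a \<in># M} \<subseteq> partitions B (m - a)"
  proof
    fix N assume "N \<in> (\<lambda>M. M - {#a#}) ` {M \<in> partitions B m. a \<in># M}"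
    then obtain M where M: "M \<in> partitions B m" "a \<in># M" "N = M - {#a#}" by auto
    then have "M = add_mset a N" by simp
    with M(1) show "N \<in> partitions B (m - a)"
      by (auto simp: partitions_def)
  qed
qed auto

lemma dpartitions_containing_bij:
  assumes "a \<in> B" "0 < a" "a \<le> m"
  shows "bij_betw (insert a) (dpartitions (B - {a}) (m - a)) {S \<in> dpartitions B m. a \<in> S}"
proof (rule bij_betw_byWitness[where f' = "\<lambda>S. S - {a}"])
  show "insert a ` dpartitions (B - {a}) (m - a) \<subseteq> {S \<in> dpartitions B m. a \<in> S}"
  proof
    fix T assume "T \<in> insert a ` dpartitions (B - {a}) (m - a)"
    then obtain S where S: "S \<in> dpartitions (B - {a}) (m - a)" "T = insert a S" by auto
    then have "a \<notin> S" "finite S" "\<Sum>S = m - a" by (auto simp: dpartitions_def)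
    with S assms show "T \<in> {S \<in> dpartitions B m. a \<in> S}"
      by (auto simp: dpartitions_def)
  qed
  show "(\<lambda>S. S - {a}) ` {S \<in> dpartitions B m. a \<in> S} \<subseteq> dpartitions (B - {a}) (m - a)"
    by (auto simp: dpartitions_def sum_diff1_nat)
qed (auto simp: dpartitions_def)

lemma sum_partitions_split:
  assumes "a \<in> B" "0 < a"
  shows "(\<Sum>M\<in>partitions B m. f M) = (\<Sum>M\<in>partitions (B - {a}) m. f M) +
           (if a \<le> m then \<Sum>M\<in>partitions B (m - a). f (add_mset a M) else 0)"
proof -
  have "(\<Sum>M\<in>partitions B m. f M) =
      (\<Sum>M\<in>{M \<in> partitions B m. a \<notin># M}. f M) + (\<Sum>M\<in>{M \<in> partitions B m. a \<in># M}. f M)"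
    by (subst sum.union_disjoint[symmetric]) (auto simp: finite_partitions intro: sum.cong)
  also have "{M \<in> partitions B m. a \<notin># M} = partitions (B - {a}) m"
    by (auto simp: partitions_def)
  also have "(\<Sum>M\<in>{M \<in> partitions B m. a \<in># M}. f M) =
      (if a \<le> m then \<Sum>M\<in>partitions B (m - a). f (add_mset a M) else 0)"
  proof (cases "a \<le> m")
    case True
    then show ?thesis
      using sum.reindex_bij_betw[OF partitions_containing_bij[OF assms True], of f] by simp
  next
    case False
    then have empty: "{M \<in> partitions B m. a \<in># M} = {}"
      using partition_parts[of _ B m] by fastforce
    show ?thesis
      unfolding empty using False by simp
  qed
  finally show ?thesis .
qed

lemma sum_dpartitions_split:
  assumes "a \<in> B" "0 < a"
  shows "(\<Sum>S\<in>dpartitions B m. f S) = (\<Sum>S\<in>dpartitions (B - {a}) m. f S) +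
           (if a \<le> m then \<Sum>S\<in>dpartitions (B - {a}) (m - a). f (insert a S) else 0)"
proof -
  have "(\<Sum>S\<in>dpartitions B m. f S) =
      (\<Sum>S\<in>{S \<in> dpartitions B m. a \<notin> S}. f S) + (\<Sum>S\<in>{S \<in> dpartitions B m. a \<in> S}. f S)"
    by (subst sum.union_disjoint[symmetric]) (auto simp: finite_dpartitions intro: sum.cong)
  also have "{S \<in> dpartitions B m. a \<notin> S} = dpartitions (B - {a}) m"
    by (auto simp: dpartitions_def)
  also have "(\<Sum>S\<in>{S \<in> dpartitions B m. a \<in> S}. f S) =
      (if a \<le> m then \<Sum>S\<in>dpartitions (B - {a}) (m - a). f (insert a S) else 0)"
  proof (cases "a \<le> m")
    case True
    then show ?thesis
      using sum.reindex_bij_betw[OF dpartitions_containing_bij[OF assms True], of f] by simp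
  next
    case False
    then have empty: "{S \<in> dpartitions B m. a \<in> S} = {}"
      using dpartition_parts[of _ B m] by fastforce
    show ?thesis
      unfolding empty using False by simp
  qed
  finally show ?thesis .
qed

section \<open>Weighted generating functions\<close>

definition partition_fps :: "int \<Rightarrow> nat set \<Rightarrow> int fps" where
  "partition_fps w B = Abs_fps (\<lambda>m. \<Sum>M\<in>partitions B m. w ^ size M)"

definition dpartition_fps :: "int \<Rightarrow> nat set \<Rightarrow> int fps" where
  "dpartition_fps w B = Abs_fps (\<lambda>m. \<Sum>S\<in>dpartitions B m. w ^ card S)"

lemma dpartition_fps_nth_0 [simp]: "dpartition_fps w B $ 0 = 1"
  by (simp add: dpartition_fps_def dpartitions_0)

lemma partition_fps_remove:
  assumes "a \<in> B" "0 < a"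
  shows "partition_fps w B * (1 - fps_const w * fps_X ^ a) = partition_fps w (B - {a})"
proof (rule fps_ext)
  fix m
  have "partition_fps w B * (1 - fps_const w * fps_X ^ a) =
      partition_fps w B - fps_X ^ a * (fps_const w * partition_fps w B)"
    by (simp add: algebra_simps)
  moreover have "partition_fps w B $ m = partition_fps w (B - {a}) $ m +
      (if a \<le> m then w * partition_fps w B $ (m - a) else 0)"
    using sum_partitions_split[OF assms, of "\<lambda>M. w ^ size M" m]
    by (simp add: partition_fps_def sum_distrib_left)
  ultimately show "(partition_fps w B * (1 - fps_const w * fps_X ^ a)) $ m =
      partition_fps w (B - {a}) $ m"
    by (simp add: fps_X_power_mult_nth)
qed

lemma dpartition_fps_remove:
  assumes "a \<in> B" "0 < a"
  shows "dpartition_fps w B = (1 + fps_const w * fps_X ^ a) * dpartition_fps w (B - {a})"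
proof (rule fps_ext)
  fix m
  have card_insert: "w ^ card (insert a S) = w * w ^ card S" if "S \<in> dpartitions (B - {a}) k" for S k
  proof -
    from that have "finite S" "a \<notin> S"
      by (auto simp: dpartitions_def)
    then show ?thesis
      by simp
  qed
  have "(1 + fps_const w * fps_X ^ a) * dpartition_fps w (B - {a}) =
      dpartition_fps w (B - {a}) + fps_X ^ a * (fps_const w * dpartition_fps w (B - {a}))"
    by (simp add: algebra_simps)
  moreover have "dpartition_fps w B $ m = dpartition_fps w (B - {a}) $ m +
      (if a \<le> m then w * dpartition_fps w (B - {a}) $ (m - a) else 0)"
    using sum_dpartitions_split[OF assms, of "\<lambda>S. w ^ card S" m] card_insert
    by (simp add: dpartition_fps_def sum_distrib_left)
  ultimately show "dpartition_fps w B $ m =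
      ((1 + fps_const w * fps_X ^ a) * dpartition_fps w (B - {a})) $ m"
    by (simp add: fps_X_power_mult_nth)
qed

lemma partition_fps_finite:
  assumes "finite S" "0 \<notin> S"
  shows "partition_fps w S * (\<Prod>k\<in>S. 1 - fps_const w * fps_X ^ k) = 1"
  using assms
proof (induction S rule: finite_induct)
  case empty
  have "partitions {} m = (if m = 0 then {{#}} else {})" for m
    by (auto simp: partitions_def)
  then show ?case
    by (intro fps_ext) (simp add: partition_fps_def)
next
  case (insert a S)
  then have "partition_fps w (insert a S) * (1 - fps_const w * fps_X ^ a) = partition_fps w S"
    using partition_fps_remove[of a "insert a S" w] by auto
  with insert show ?case
    by (simp add: mult.assoc[symmetric])
qed

lemma dpartition_fps_finite:
  assumes "finite S" "0 \<notin> S"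
  shows "dpartition_fps w S = (\<Prod>k\<in>S. 1 + fps_const w * fps_X ^ k)"
  using assms
proof (induction S rule: finite_induct)
  case empty
  have "dpartitions {} m = (if m = 0 then {{}} else {})" for m
    by (auto simp: dpartitions_def)
  then show ?case
    by (intro fps_ext) (simp add: dpartition_fps_def)
next
  case (insert a S)
  then show ?case
    using dpartition_fps_remove[of a "insert a S" w] by auto
qed

lemma partition_fps_eq_upto:
  "B \<inter> {1..n} = B' \<inter> {1..n} \<Longrightarrow> fps_eq_upto n (partition_fps w B) (partition_fps w B')"
  unfolding fps_eq_upto_def partition_fps_def fps_nth_Abs_fps
  using partitions_cong_upto[of B n B'] by simp

lemma dpartition_fps_eq_upto:
  "B \<inter> {1..n} = B' \<inter> {1..n} \<Longrightarrow> fps_eq_upto n (dpartition_fps w B) (dpartition_fps w B')"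
  unfolding fps_eq_upto_def dpartition_fps_def fps_nth_Abs_fps
  using dpartitions_cong_upto[of B n B'] by simp

lemma partition_fps_dpartition_fps_inverse: "partition_fps w B * dpartition_fps (-w) B = 1"
proof (rule fps_eq_upto_all)
  fix n
  define Bn where "Bn = B \<inter> {1..n}"
  have "fps_eq_upto n (partition_fps w B * dpartition_fps (-w) B)
      (partition_fps w Bn * dpartition_fps (-w) Bn)"
    by (intro fps_eq_upto_mult partition_fps_eq_upto dpartition_fps_eq_upto) (auto simp: Bn_def)
  also have "partition_fps w Bn * dpartition_fps (-w) Bn = 1"
    using partition_fps_finite[of Bn w] dpartition_fps_finite[of Bn "-w"]
    by (simp add: Bn_def flip: fps_const_neg)
  finally show "fps_eq_upto n (partition_fps w B * dpartition_fps (-w) B) 1" .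
qed

lemma dpartition_fps_Un:
  assumes "A \<inter> B = {}"
  shows "dpartition_fps w (A \<union> B) = dpartition_fps w A * dpartition_fps w B"
proof (rule fps_eq_upto_all)
  fix n
  define An Bn where "An = A \<inter> {1..n}" and "Bn = B \<inter> {1..n}"
  have "fps_eq_upto n (dpartition_fps w (A \<union> B)) (dpartition_fps w (An \<union> Bn))"
    by (intro dpartition_fps_eq_upto) (auto simp: An_def Bn_def)
  also have "dpartition_fps w (An \<union> Bn) = dpartition_fps w An * dpartition_fps w Bn"
    using assms by (simp add: An_def Bn_def dpartition_fps_finite prod.union_disjoint
        disjoint_iff)
  also have "fps_eq_upto n \<dots> (dpartition_fps w A * dpartition_fps w B)"
    by (intro fps_eq_upto_mult dpartition_fps_eq_upto) (auto simp: An_def Bn_def)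
  finally show "fps_eq_upto n (dpartition_fps w (A \<union> B)) (dpartition_fps w A * dpartition_fps w B)" .
qed

lemma dpartition_fps_double:
  "dpartition_fps w B * dpartition_fps (-w) B = dpartition_fps (-(w ^ 2)) ((*) 2 ` B)"
proof (rule fps_eq_upto_all)
  fix n
  define Bn where "Bn = B \<inter> {1..n}"
  have "fps_eq_upto n (dpartition_fps w B * dpartition_fps (-w) B)
      (dpartition_fps w Bn * dpartition_fps (-w) Bn)"
    by (intro fps_eq_upto_mult dpartition_fps_eq_upto) (auto simp: Bn_def)
  also have "dpartition_fps w Bn * dpartition_fps (-w) Bn =
      (\<Prod>k\<in>Bn. 1 + fps_const (-(w ^ 2)) * fps_X ^ (2 * k))"
  proof -
    have "(1 + fps_const w * fps_X ^ k) * (1 + fps_const (-w) * fps_X ^ k) =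
        1 + fps_const (-(w ^ 2)) * fps_X ^ (2 * k)" for k :: nat
    proof -
      have "fps_const (-(w ^ 2)) * fps_X ^ (2 * k) = - ((fps_const w * fps_X ^ k) ^ 2)"
        by (simp add: power_mult_distrib mult.commute[of 2 k] power_mult flip: fps_const_neg)
      then show ?thesis
        by (simp add: algebra_simps power2_eq_square flip: fps_const_neg)
    qed
    then show ?thesis
      by (simp add: Bn_def dpartition_fps_finite flip: prod.distrib)
  qed
  also have "\<dots> = dpartition_fps (-(w ^ 2)) ((*) 2 ` Bn)"
  proof -
    have "finite ((*) 2 ` Bn)" "0 \<notin> (*) 2 ` Bn" "inj_on ((*) (2::nat)) Bn"
      by (auto simp: Bn_def inj_on_def)
    then show ?thesis
      by (simp add: dpartition_fps_finite prod.reindex)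
  qed
  also have "fps_eq_upto n \<dots> (dpartition_fps (-(w ^ 2)) ((*) 2 ` B))"
    by (intro dpartition_fps_eq_upto) (auto simp: Bn_def)
  finally show "fps_eq_upto n (dpartition_fps w B * dpartition_fps (-w) B)
      (dpartition_fps (-(w ^ 2)) ((*) 2 ` B))" .
qed

lemma sum_minus_one_power:
  assumes "finite X"
  shows "(\<Sum>x\<in>X. (-1 :: int) ^ g x) = int (card {x \<in> X. even (g x)}) - int (card {x \<in> X. odd (g x)})"
proof -
  have "(\<Sum>x\<in>X. (-1 :: int) ^ g x) = (\<Sum>x\<in>X. of_bool (even (g x)) - of_bool (odd (g x)))"
    by (intro sum.cong) auto
  also have "\<dots> = int (card {x \<in> X. even (g x)}) - int (card {x \<in> X. odd (g x)})"
    using assms by (simp add: sum_subtractf Int_def conj_commute)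
  finally show ?thesis .
qed

lemma pe_minus_po: "pe B m - po B m = partition_fps (-1) B $ m"
  by (simp add: pe_def po_def partition_fps_def sum_minus_one_power finite_partitions)

lemma qe_minus_qo: "qe B m - qo B m = dpartition_fps (-1) B $ m"
  by (simp add: qe_def qo_def dpartition_fps_def sum_minus_one_power finite_dpartitions)

section \<open>Euler's pentagonal number theorem\<close>

definition tri :: "nat \<Rightarrow> nat" where
  "tri j = j * (j + 1) div 2"

lemma tri_0 [simp]: "tri 0 = 0"
  by (simp add: tri_def)

lemma tri_Suc: "tri (Suc j) = tri j + Suc j"
  unfolding tri_def by (induction j) auto

lemma tri_ge: "j \<le> tri j"
  by (induction j) (auto simp: tri_Suc)

lemma tri_mono: "j \<le> k \<Longrightarrow> tri j \<le> tri k"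
  by (induction k) (auto simp: tri_Suc le_Suc_eq)

lemma two_tri: "2 * tri j = j * (j + 1)"
  by (induction j) (auto simp: tri_Suc)

definition pent_minus :: "nat \<Rightarrow> nat" where
  "pent_minus k = tri k + (k - 1) * k"

definition pent_plus :: "nat \<Rightarrow> nat" where
  "pent_plus k = tri k + k * k"

definition shanks_term :: "nat \<Rightarrow> nat \<Rightarrow> int fps" where
  "shanks_term n j = fps_const ((-1) ^ j) * fps_X ^ (tri j + n * j) * (\<Prod>k\<in>{Suc j..n}. 1 - fps_X ^ k)"

definition shanks_telescope :: "nat \<Rightarrow> nat \<Rightarrow> int fps" where
  "shanks_telescope n j = fps_const ((-1) ^ j) * fps_X ^ (tri j + n * j) * (\<Prod>k\<in>{j..n}. 1 - fps_X ^ k)"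

definition pentagonal_sum :: "nat \<Rightarrow> int fps" where
  "pentagonal_sum n =
    1 + (\<Sum>k=1..n. fps_const ((-1) ^ k) * (fps_X ^ pent_minus k + fps_X ^ pent_plus k))"

lemma shanks_term_Suc:
  assumes "j \<le> n"
  shows "shanks_term (Suc n) j - shanks_term n j = shanks_telescope n (Suc j) - shanks_telescope n j"
proof -
  define P :: "int fps" where "P = (\<Prod>k\<in>{Suc j..n}. 1 - fps_X ^ k)"
  define s :: "int fps" where "s = fps_const ((-1) ^ j)"
  define Y :: "int fps" where "Y = fps_X ^ (tri j + n * j)"
  have p1: "(\<Prod>k\<in>{Suc j..Suc n}. 1 - fps_X ^ k) = (1 - fps_X ^ Suc n) * P"
    unfolding P_def using assms by (simp add: prod.nat_ivl_Suc')
  have p2: "(\<Prod>k\<in>{j..n}. 1 - fps_X ^ k) = (1 - fps_X ^ j) * P"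
    unfolding P_def using assms by (simp add: prod.atLeast_Suc_atMost)
  have e1: "(fps_X :: int fps) ^ (tri j + Suc n * j) = Y * fps_X ^ j"
    unfolding Y_def by (simp add: power_add[symmetric] algebra_simps)
  have e2: "(fps_X :: int fps) ^ (tri (Suc j) + n * Suc j) = Y * fps_X ^ j * fps_X ^ Suc n"
    unfolding Y_def by (simp add: power_add[symmetric] algebra_simps tri_Suc)
  have sign: "fps_const ((-1) ^ Suc j) = - s"
    by (simp add: s_def)
  have "shanks_term (Suc n) j - shanks_term n j =
      s * P * (Y * fps_X ^ j - Y * fps_X ^ j * fps_X ^ Suc n - Y)"
    unfolding shanks_term_def p1 e1 s_def[symmetric] Y_def[symmetric] P_def[symmetric]
    by (simp add: algebra_simps)
  also have "\<dots> = shanks_telescope n (Suc j) - shanks_telescope n j"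
    unfolding shanks_telescope_def p2 e2 sign s_def[symmetric] Y_def[symmetric] P_def[symmetric]
    by (simp add: algebra_simps)
  finally show ?thesis .
qed

lemma shanks_identity: "(\<Sum>j\<le>n. shanks_term n j) = pentagonal_sum n"
proof (induction n)
  case 0
  then show ?case
    by (simp add: shanks_term_def pentagonal_sum_def)
next
  case (Suc n)
  have "(\<Sum>j\<le>Suc n. shanks_term (Suc n) j) =
      shanks_term (Suc n) (Suc n) + (\<Sum>j\<le>n. shanks_term (Suc n) j)"
    by simp
  also have "(\<Sum>j\<le>n. shanks_term (Suc n) j) =
      (\<Sum>j\<le>n. shanks_term n j) + (\<Sum>j<Suc n. shanks_telescope n (Suc j) - shanks_telescope n j)"
    by (simp add: shanks_term_Suc[symmetric] lessThan_Suc_atMost sum.distrib[symmetric])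
  also have "(\<Sum>j<Suc n. shanks_telescope n (Suc j) - shanks_telescope n j) =
      shanks_telescope n (Suc n) - shanks_telescope n 0"
    by (rule sum_lessThan_telescope)
  also have "shanks_telescope n 0 = 0"
    unfolding shanks_telescope_def by (subst prod_zero) (auto intro!: bexI[of _ 0])
  finally show ?case
    using Suc.IH
    by (simp add: shanks_term_def shanks_telescope_def pentagonal_sum_def pent_minus_def
        pent_plus_def algebra_simps)
qed

lemma prod_one_minus_X_power_nth:
  assumes "m \<le> n"
  shows "(\<Prod>k\<in>{1..n}. 1 - fps_X ^ k :: int fps) $ m = pentagonal_sum n $ m"
proof -
  have "shanks_term n j $ m = 0" if "j \<in> {1..n}" for j
  proof -
    have "n \<le> n * j" "0 < tri j"
      using that tri_ge[of j] by auto
    then have "m < tri j + n * j"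
      using assms by linarith
    moreover have "shanks_term n j =
        fps_X ^ (tri j + n * j) * (fps_const ((-1) ^ j) * (\<Prod>k\<in>{Suc j..n}. 1 - fps_X ^ k))"
      by (simp add: shanks_term_def algebra_simps)
    ultimately show ?thesis
      by (simp add: fps_X_power_mult_nth)
  qed
  moreover have "pentagonal_sum n = shanks_term n 0 + (\<Sum>j\<in>{1..n}. shanks_term n j)"
    unfolding shanks_identity[symmetric] atMost_atLeast0 by (simp add: sum.atLeast_Suc_atMost)
  ultimately show ?thesis
    by (simp add: shanks_term_def fps_sum_nth)
qed

lemma pent_iff: "pent m k \<longleftrightarrow> 1 \<le> k \<and> (m = pent_minus k \<or> m = pent_plus k)"
proof (cases "k = 0")
  case False
  have "2 * pent_plus k = 3 * k ^ 2 + k" "2 * pent_minus k = 3 * k ^ 2 - k"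
    using two_tri[of k] False
    by (auto simp: pent_plus_def pent_minus_def algebra_simps power2_eq_square)
  then show ?thesis
    unfolding pent_def by (metis mult_left_cancel zero_neq_numeral)
qed (simp add: pent_def)

lemma pent_minus_lt_pent_plus: "1 \<le> k \<Longrightarrow> pent_minus k < pent_plus k"
  by (cases k) (auto simp: pent_minus_def pent_plus_def)

lemma pent_plus_lt_pent_minus: "k < k' \<Longrightarrow> pent_plus k < pent_minus k'"
proof -
  assume "k < k'"
  then have "tri (Suc k) \<le> tri k'" "k * Suc k \<le> (k' - 1) * k'"
    using mult_le_mono[of k "k' - 1" "Suc k" k'] by (simp_all add: tri_mono)
  then show ?thesis
    by (simp add: pent_plus_def pent_minus_def tri_Suc)
qed

lemma pent_unique: "pent m k \<Longrightarrow> pent m k' \<Longrightarrow> k = k'"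
proof -
  have "\<not> k < k'" if "pent m k" "pent m k'" for k k'
  proof
    assume "k < k'"
    then have "pent_plus k < pent_minus k'"
      by (rule pent_plus_lt_pent_minus)
    moreover have "m \<le> pent_plus k" "pent_minus k' \<le> m"
      using that pent_minus_lt_pent_plus[of k] pent_minus_lt_pent_plus[of k']
      by (auto simp: pent_iff)
    ultimately show False
      by simp
  qed
  then show "pent m k \<Longrightarrow> pent m k' \<Longrightarrow> k = k'"
    by (meson linorder_neqE_nat)
qed

lemma pent_le: "pent m k \<Longrightarrow> k \<le> m"
  using tri_ge[of k] by (auto simp: pent_iff pent_minus_def pent_plus_def)

lemma pentagonal_sum_nth:
  assumes "m \<le> n"
  shows "pentagonal_sum n $ m = omega m"
proof -
  define t where
    "t k = (-1 :: int) ^ k * ((if m = pent_minus k then 1 else 0) + (if m = pent_plus k then 1 else 0))"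
    for k
  have "pentagonal_sum n $ m = (if m = 0 then 1 else 0) + (\<Sum>k=1..n. t k)"
    unfolding pentagonal_sum_def t_def by (simp add: fps_sum_nth)
  also have "(\<Sum>k=1..n. t k) = (if \<exists>k. pent m k then (-1) ^ (THE k. pent m k) else 0)"
  proof (cases "\<exists>k. pent m k")
    case True
    then obtain k0 where k0: "pent m k0" ..
    then have "(THE k. pent m k) = k0"
      using pent_unique by blast
    moreover have "k0 \<in> {1..n}"
      using k0 pent_le[OF k0] assms by (auto simp: pent_iff)
    moreover have "t k = 0" if "k \<in> {1..n} - {k0}" for k
      using that k0 pent_unique[of m k0 k] by (auto simp: t_def pent_iff)
    moreover have "t k0 = (-1) ^ k0"
      using k0 pent_minus_lt_pent_plus[of k0] by (auto simp: t_def pent_iff)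
    ultimately show ?thesis
      using True by (simp add: sum.remove sum.neutral)
  next
    case False
    then show ?thesis
      by (auto simp: t_def pent_iff intro!: sum.neutral)
  qed
  finally show ?thesis
    using pent_le[of 0] by (auto simp: omega_def pent_iff)
qed

theorem pentagonal_number_theorem: "dpartition_fps (-1) {k. 0 < k} = Abs_fps omega"
proof (rule fps_ext)
  fix m
  have "fps_eq_upto m (dpartition_fps (-1) {k. 0 < k}) (dpartition_fps (-1) {1..m})"
    by (rule dpartition_fps_eq_upto) auto
  then have "dpartition_fps (-1) {k. 0 < k} $ m = dpartition_fps (-1) {1..m} $ m"
    by (simp add: fps_eq_upto_def)
  also have "\<dots> = (\<Prod>k\<in>{1..m}. 1 - fps_X ^ k :: int fps) $ m"
    by (simp add: dpartition_fps_finite)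
  also have "\<dots> = omega m"
    using prod_one_minus_X_power_nth[of m m] pentagonal_sum_nth[of m m] by simp
  finally show "dpartition_fps (-1) {k. 0 < k} $ m = Abs_fps omega $ m"
    by simp
qed

section \<open>Partitions into distinct odd parts\<close>

lemma minus_one_power_sum_odd:
  assumes "finite S" "\<forall>x\<in>S. odd x"
  shows "(-1 :: 'a :: ring_1) ^ (\<Sum>S) = (-1) ^ card S"
  using assms by (induction S rule: finite_induct) (auto simp: power_add)

lemma odp_fps: "Abs_fps (\<lambda>m. (-1) ^ m * odp m) = dpartition_fps (-1) {k. odd k}"
proof (rule fps_ext)
  fix m
  have "(\<Sum>S\<in>dpartitions {k. odd k} m. (-1 :: int) ^ card S) = (\<Sum>S\<in>dpartitions {k. odd k} m. (-1) ^ m)"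
  proof (intro sum.cong refl)
    fix S assume "S \<in> dpartitions {k. odd k} m"
    then have "finite S" "\<forall>x\<in>S. odd x" "\<Sum>S = m"
      by (auto simp: dpartitions_def)
    then show "(-1 :: int) ^ card S = (-1) ^ m"
      by (metis minus_one_power_sum_odd)
  qed
  then show "Abs_fps (\<lambda>m. (-1) ^ m * odp m) $ m = dpartition_fps (-1) {k. odd k} $ m"
    by (simp add: odp_def dpartition_fps_def mult.commute)
qed

text \<open>Euler's theorem that partitions into distinct parts and into odd parts are equinumerous.\<close>
lemma dpartition_fps_pos_odd_inverse:
  "dpartition_fps 1 {k. 0 < k} * dpartition_fps (-1) {k. odd k} = 1"
proof -
  define E where "E = (*) 2 ` {k::nat. 0 < k}"
  have "{k. 0 < k} = E \<union> {k. odd k}" "E \<inter> {k. odd k} = {}"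
    by (auto simp: E_def elim!: evenE intro: odd_pos)
  then have "dpartition_fps (-1) {k. 0 < k} = dpartition_fps (-1) E * dpartition_fps (-1) {k. odd k}"
    by (simp add: dpartition_fps_Un)
  moreover have "dpartition_fps 1 {k. 0 < k} * dpartition_fps (-1) {k. 0 < k} = dpartition_fps (-1) E"
    using dpartition_fps_double[of 1 "{k. 0 < k}"] by (simp add: E_def)
  ultimately have "dpartition_fps (-1) E * (dpartition_fps 1 {k. 0 < k} * dpartition_fps (-1) {k. odd k}) =
      dpartition_fps (-1) E * 1"
    by (simp add: algebra_simps)
  moreover have "dpartition_fps (-1) E \<noteq> 0"
    using dpartition_fps_nth_0 by (metis fps_zero_nth zero_neq_one)
  ultimately show ?thesis
    by simp
qed

section \<open>Counting parts\<close>

definition multiples_fps :: "int \<Rightarrow> nat \<Rightarrow> int fps" where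
  "multiples_fps c a = Abs_fps (\<lambda>k. if 0 < k \<and> a dvd k then c ^ (k div a - 1) else 0)"

lemma multiples_fps_times:
  assumes "0 < a"
  shows "multiples_fps c a * (1 - fps_const c * fps_X ^ a) = fps_X ^ a"
proof (rule fps_ext)
  fix k
  have "multiples_fps c a * (1 - fps_const c * fps_X ^ a) =
      multiples_fps c a - fps_X ^ a * (fps_const c * multiples_fps c a)"
    by (simp add: algebra_simps)
  moreover have "(multiples_fps c a - fps_X ^ a * (fps_const c * multiples_fps c a)) $ k =
      (fps_X ^ a :: int fps) $ k"
  proof (cases "a < k \<and> a dvd k")
    case True
    then obtain q where q: "k = a * q"
      by (auto elim: dvdE)
    with True obtain r where r: "q = Suc (Suc r)"
      by (cases q; cases "q - 1") auto
    then have "k - a = a * Suc r"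
      using q by (simp add: algebra_simps)
    with q r assms show ?thesis
      by (simp add: multiples_fps_def fps_X_power_mult_nth)
  next
    case False
    then consider "k < a" | "k = a" | "a < k" "\<not> a dvd k" "\<not> a dvd (k - a)"
      by (metis dvd_minus_self linorder_neqE_nat)
    then show ?thesis
    proof cases
      case 1
      then have "\<not> (0 < k \<and> a dvd k)"
        by (auto dest: dvd_imp_le)
      with 1 show ?thesis
        by (simp add: multiples_fps_def fps_X_power_mult_nth)
    qed (use assms in \<open>simp_all add: multiples_fps_def fps_X_power_mult_nth\<close>)
  qed
  ultimately show "(multiples_fps c a * (1 - fps_const c * fps_X ^ a)) $ k = (fps_X ^ a :: int fps) $ k"
    by simp
qed

lemma partitions_count_fps:
  assumes "a \<in> B" "0 < a"
  shows "Abs_fps (\<lambda>m. \<Sum>M\<in>partitions B m. int (count M a)) = partition_fps 1 B * multiples_fps 1 a"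
proof -
  define F where "F = Abs_fps (\<lambda>m. \<Sum>M\<in>partitions B m. int (count M a))"
  have F_rec: "F $ m = (if a \<le> m then F $ (m - a) + partition_fps 1 B $ (m - a) else 0)" for m
  proof -
    have "(\<Sum>M\<in>partitions (B - {a}) m. int (count M a)) = 0"
      by (intro sum.neutral) (auto simp: partitions_def count_eq_zero_iff)
    then show ?thesis
      using sum_partitions_split[OF assms, of "\<lambda>M. int (count M a)" m]
      by (simp add: F_def partition_fps_def sum.distrib)
  qed
  have "F * (1 - fps_X ^ a) = fps_X ^ a * partition_fps 1 B"
  proof (rule fps_ext)
    fix m
    have "F * (1 - fps_X ^ a) = F - fps_X ^ a * F"
      by (simp add: algebra_simps)
    then show "(F * (1 - fps_X ^ a)) $ m = (fps_X ^ a * partition_fps 1 B) $ m"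
      using F_rec[of m] by (simp add: fps_X_power_mult_nth)
  qed
  also have "\<dots> = (partition_fps 1 B * multiples_fps 1 a) * (1 - fps_X ^ a)"
    using multiples_fps_times[OF assms(2), of 1] by (simp add: mult.assoc)
  finally have "F * (1 - fps_X ^ a) = (partition_fps 1 B * multiples_fps 1 a) * (1 - fps_X ^ a)" .
  then show ?thesis
    unfolding F_def using mult_right_cancel[OF fps_one_minus_X_power_nonzero[OF assms(2)]] by blast
qed

lemma dpartitions_member_fps:
  assumes "a \<in> B" "0 < a"
  shows "Abs_fps (\<lambda>m. int (card {S \<in> dpartitions B m. a \<in> S})) = dpartition_fps 1 B * multiples_fps (-1) a"
proof -
  have "card {S \<in> dpartitions B m. a \<in> S} = (if a \<le> m then card (dpartitions (B - {a}) (m - a)) else 0)"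
    for m
  proof (cases "a \<le> m")
    case True
    then show ?thesis
      using bij_betw_same_card[OF dpartitions_containing_bij[OF assms True]] by simp
  next
    case False
    then have empty: "{S \<in> dpartitions B m. a \<in> S} = {}"
      using dpartition_parts[of _ B m] by fastforce
    show ?thesis
      unfolding empty using False by simp
  qed
  then have "Abs_fps (\<lambda>m. int (card {S \<in> dpartitions B m. a \<in> S})) = fps_X ^ a * dpartition_fps 1 (B - {a})"
    by (intro fps_ext) (simp add: fps_X_power_mult_nth dpartition_fps_def)
  also have "\<dots> = multiples_fps (-1) a * (1 + fps_X ^ a) * dpartition_fps 1 (B - {a})"
    using multiples_fps_times[OF assms(2), of "-1"] by simp
  also have "\<dots> = dpartition_fps 1 B * multiples_fps (-1) a"
    using dpartition_fps_remove[OF assms, of 1] by (simp add: algebra_simps)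
  finally show ?thesis .
qed

definition divisor_fps :: "int \<Rightarrow> nat set \<Rightarrow> int fps" where
  "divisor_fps c A = Abs_fps (\<lambda>k. if k = 0 then 0 else \<Sum>a | a \<in> A \<and> a dvd k. c ^ (k div a - 1))"

lemma divisor_fps_nth_0 [simp]: "divisor_fps c A $ 0 = 0"
  by (simp add: divisor_fps_def)

lemma divisor_fps_1_nth: "0 < k \<Longrightarrow> divisor_fps 1 A $ k = tauA A k"
  by (simp add: divisor_fps_def tauA_def)

lemma divisor_fps_minus_1_nth: "0 < k \<Longrightarrow> divisor_fps (-1) A $ k = tausA A k"
  by (simp add: divisor_fps_def tausA_def)

lemma sum_multiples_fps_eq_upto:
  "fps_eq_upto n (\<Sum>a\<in>A \<inter> {1..n}. multiples_fps c a) (divisor_fps c A)"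
  unfolding fps_eq_upto_def
proof (intro allI impI)
  fix i assume "i \<le> n"
  show "(\<Sum>a\<in>A \<inter> {1..n}. multiples_fps c a) $ i = divisor_fps c A $ i"
  proof (cases "i = 0")
    case False
    have "a \<in> {1..n}" if "a dvd i" for a
    proof -
      have "a \<noteq> 0" "a \<le> i"
        using that False by (auto simp: dvd_imp_le)
      with \<open>i \<le> n\<close> show ?thesis
        by simp
    qed
    then have "{a \<in> A \<inter> {1..n}. a dvd i} = {a. a \<in> A \<and> a dvd i}"
      by blast
    with False show ?thesis
      by (simp add: fps_sum_nth multiples_fps_def divisor_fps_def sum.inter_filter[symmetric])
  qed (simp add: fps_sum_nth multiples_fps_def divisor_fps_def)
qed

lemma Np_fps: "Abs_fps (Np A) = partition_fps 1 A * divisor_fps 1 A"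
proof (rule fps_eq_upto_all)
  fix n
  define An where "An = A \<inter> {1..n}"
  have "fps_eq_upto n (Abs_fps (Np A))
      (\<Sum>a\<in>An. Abs_fps (\<lambda>m. \<Sum>M\<in>partitions A m. int (count M a)))"
    unfolding fps_eq_upto_def
  proof (intro allI impI)
    fix m assume "m \<le> n"
    have "size M = (\<Sum>a\<in>An. count M a)" if "M \<in> partitions A m" for M
      using partition_parts[OF that] \<open>m \<le> n\<close> by (intro size_eq_sum_count) (auto simp: An_def)
    then have "Np A m = (\<Sum>M\<in>partitions A m. \<Sum>a\<in>An. int (count M a))"
      unfolding Np_def by (simp cong: sum.cong)
    then show "Abs_fps (Np A) $ m = (\<Sum>a\<in>An. Abs_fps (\<lambda>m. \<Sum>M\<in>partitions A m. int (count M a))) $ m"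
      by (simp add: fps_sum_nth sum.swap[of _ An])
  qed
  also have "(\<Sum>a\<in>An. Abs_fps (\<lambda>m. \<Sum>M\<in>partitions A m. int (count M a))) =
      partition_fps 1 A * (\<Sum>a\<in>An. multiples_fps 1 a)"
    by (simp add: An_def partitions_count_fps sum_distrib_left)
  also have "fps_eq_upto n \<dots> (partition_fps 1 A * divisor_fps 1 A)"
    unfolding An_def by (intro fps_eq_upto_mult fps_eq_upto_refl sum_multiples_fps_eq_upto)
  finally show "fps_eq_upto n (Abs_fps (Np A)) (partition_fps 1 A * divisor_fps 1 A)" .
qed

lemma Nq_fps: "Abs_fps (Nq A) = dpartition_fps 1 A * divisor_fps (-1) A"
proof (rule fps_eq_upto_all)
  fix n
  define An where "An = A \<inter> {1..n}"
  have "fps_eq_upto n (Abs_fps (Nq A))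
      (\<Sum>a\<in>An. Abs_fps (\<lambda>m. int (card {S \<in> dpartitions A m. a \<in> S})))"
    unfolding fps_eq_upto_def
  proof (intro allI impI)
    fix m assume "m \<le> n"
    have "int (card S) = (\<Sum>a\<in>An. of_bool (a \<in> S))" if "S \<in> dpartitions A m" for S
    proof -
      have "An \<inter> {a. a \<in> S} = S"
        using dpartition_parts[OF that] \<open>m \<le> n\<close> by (auto simp: An_def)
      then show ?thesis
        by (simp add: An_def)
    qed
    then have "Nq A m = (\<Sum>S\<in>dpartitions A m. \<Sum>a\<in>An. of_bool (a \<in> S))"
      unfolding Nq_def by (simp cong: sum.cong)
    also have "\<dots> = (\<Sum>a\<in>An. int (card {S \<in> dpartitions A m. a \<in> S}))"
      by (subst sum.swap) (simp add: finite_dpartitions Int_def)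
    finally show "Abs_fps (Nq A) $ m =
        (\<Sum>a\<in>An. Abs_fps (\<lambda>m. int (card {S \<in> dpartitions A m. a \<in> S}))) $ m"
      by (simp add: fps_sum_nth)
  qed
  also have "(\<Sum>a\<in>An. Abs_fps (\<lambda>m. int (card {S \<in> dpartitions A m. a \<in> S}))) =
      dpartition_fps 1 A * (\<Sum>a\<in>An. multiples_fps (-1) a)"
    by (simp add: An_def dpartitions_member_fps sum_distrib_left)
  also have "fps_eq_upto n \<dots> (dpartition_fps 1 A * divisor_fps (-1) A)"
    unfolding An_def by (intro fps_eq_upto_mult fps_eq_upto_refl sum_multiples_fps_eq_upto)
  finally show "fps_eq_upto n (Abs_fps (Nq A)) (dpartition_fps 1 A * divisor_fps (-1) A)" .
qed

section \<open>The two identities\<close>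

lemma pos_eq_Un_compl_pos: "0 \<notin> A \<Longrightarrow> {k. 0 < k} = A \<union> compl_pos A"
  by (auto simp: compl_pos_def intro: gr0I)

lemma Int_compl_pos: "A \<inter> compl_pos A = {}"
  by (auto simp: compl_pos_def)

lemma Np_omega_fps:
  assumes "0 \<notin> A"
  shows "Abs_fps (Np A) * Abs_fps omega = divisor_fps 1 A * dpartition_fps (-1) (compl_pos A)"
proof -
  have "Abs_fps omega = dpartition_fps (-1) A * dpartition_fps (-1) (compl_pos A)"
    by (simp add: pentagonal_number_theorem[symmetric] pos_eq_Un_compl_pos[OF assms] dpartition_fps_Un
        Int_compl_pos)
  then have "Abs_fps (Np A) * Abs_fps omega =
      (partition_fps 1 A * dpartition_fps (-1) A) * (divisor_fps 1 A * dpartition_fps (-1) (compl_pos A))"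
    by (simp add: Np_fps ac_simps)
  then show ?thesis
    by (simp add: partition_fps_dpartition_fps_inverse[of 1, simplified])
qed

lemma Nq_odp_fps:
  assumes "0 \<notin> A"
  shows "Abs_fps (Nq A) * Abs_fps (\<lambda>m. (-1) ^ m * odp m) =
    divisor_fps (-1) A * partition_fps (-1) (compl_pos A)"
proof -
  define C where "C = compl_pos A"
  define u where "u = dpartition_fps 1 C"
  define v where "v = dpartition_fps 1 A * dpartition_fps (-1) {k. odd k}"
  have "dpartition_fps 1 {k. 0 < k} = dpartition_fps 1 A * u"
    by (simp add: u_def C_def pos_eq_Un_compl_pos[OF assms] dpartition_fps_Un Int_compl_pos)
  then have vu: "v * u = 1"
    using dpartition_fps_pos_odd_inverse unfolding v_def by (simp only: mult_ac)
  have Cu: "partition_fps (-1) C * u = 1"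
    using partition_fps_dpartition_fps_inverse[of "-1" C] by (simp add: u_def)
  have "v = v * (partition_fps (-1) C * u)"
    by (simp add: Cu)
  also have "\<dots> = partition_fps (-1) C * (v * u)"
    by (simp only: mult_ac)
  finally have "v = partition_fps (-1) C"
    by (simp add: vu)
  moreover have "Abs_fps (Nq A) * Abs_fps (\<lambda>m. (-1) ^ m * odp m) = divisor_fps (-1) A * v"
    unfolding Nq_fps odp_fps v_def by (simp only: mult_ac)
  ultimately show ?thesis
    by (simp add: C_def)
qed

theorem theorem3:
  fixes A :: "nat set" and n :: nat
  assumes "A \<noteq> {}" and "0 \<notin> A" and "n > 0"
  shows "((\<Sum>k=1..n. Np A k * omega (n - k))
           = (\<Sum>k=1..n. tauA A k * (qe (compl_pos A) (n - k) - qo (compl_pos A) (n - k)))) \<and>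
         ((\<Sum>k=1..n. (-1) ^ (n - k) * Nq A k * odp (n - k))
           = (\<Sum>k=1..n. tausA A k * (pe (compl_pos A) (n - k) - po (compl_pos A) (n - k))))"
proof
  have "(Abs_fps (Np A) * Abs_fps omega) $ n =
      (divisor_fps 1 A * dpartition_fps (-1) (compl_pos A)) $ n"
    by (simp only: Np_omega_fps[OF assms(2)])
  then show "(\<Sum>k=1..n. Np A k * omega (n - k)) =
      (\<Sum>k=1..n. tauA A k * (qe (compl_pos A) (n - k) - qo (compl_pos A) (n - k)))"
    by (simp add: fps_mult_nth_from_1 Np_0 divisor_fps_1_nth qe_minus_qo)
next
  have "(Abs_fps (Nq A) * Abs_fps (\<lambda>m. (-1) ^ m * odp m)) $ n =
      (divisor_fps (-1) A * partition_fps (-1) (compl_pos A)) $ n"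
    by (simp only: Nq_odp_fps[OF assms(2)])
  then show "(\<Sum>k=1..n. (-1) ^ (n - k) * Nq A k * odp (n - k)) =
      (\<Sum>k=1..n. tausA A k * (pe (compl_pos A) (n - k) - po (compl_pos A) (n - k)))"
    by (simp add: fps_mult_nth_from_1 Nq_0 divisor_fps_minus_1_nth pe_minus_po ac_simps)
qed

end
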